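(* Let $k\geq 1$ and $n\geq 2$ be integers. Then $C_{k,n}^2-C_{k,n-1}C_{k,n+1}=-8(k-1)^{n}$.
   Context: For an integer $k\geq 1$, the generalized balancing-Lucas numbers are defined by $C_{k,0}=1$, $C_{k,1}=3$ and $C_{k,n}=3kC_{k,n-1}+(1-k)C_{k,n-2}$ for $n\geq 2$. *)

theory Defs
  imports Main
begin

fun balC :: "int \<Rightarrow> nat \<Rightarrow> int" where
  "balC k 0 = 1"
| "balC k (Suc 0) = 3"
| "balC k (Suc (Suc n)) = 3 * k * balC k (Suc n) + (1 - k) * balC k n"

end

theory Submission
  imports Defs
begin

lemma cassini_linear_recurrence:
  fixes a :: "nat \<Rightarrow> 'a::comm_ring_1"
  assumes rec: "\<And>n. a (Suc (Suc n)) = p * a (Suc n) + q * a n"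
  shows "(a (Suc n))^2 - a n * a (Suc (Suc n)) = (- q)^n * ((a 1)^2 - a 0 * a 2)"
proof (induction n)
  case 0
  then show ?case by (simp add: numeral_2_eq_2)
next
  case (Suc n)
  \<comment> \<open>Eliminating a (n+3) and then p * a (n+1) by the recurrence leaves -q times the previous determinant.\<close>
  have "(a (Suc (Suc n)))^2 - a (Suc n) * a (Suc (Suc (Suc n)))
      = - q * ((a (Suc n))^2 - a n * a (Suc (Suc n)))"
    by (simp only: rec[of "Suc n"] rec[of n]) (simp add: algebra_simps power2_eq_square)
  with Suc.IH show ?case by simp
qed

theorem mainTheorem16:
  fixes k :: int and n :: nat
  assumes "k \<ge> 1" and "n \<ge> 2"
  shows "(balC k n)^2 - balC k (n - 1) * balC k (n + 1) = -8 * (k - 1)^n"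
proof -
  obtain m where n: "n = Suc m" using assms(2) by (cases n) auto
  have "(balC k (Suc m))^2 - balC k m * balC k (Suc (Suc m))
      = (k - 1)^m * ((balC k 1)^2 - balC k 0 * balC k 2)"
    using cassini_linear_recurrence[of "balC k" "3 * k" "1 - k" m] by simp
  also have "(balC k 1)^2 - balC k 0 * balC k 2 = -8 * (k - 1)"
    by (simp add: numeral_2_eq_2 power2_eq_square algebra_simps)
  finally show ?thesis by (simp add: n algebra_simps)
qed

end
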